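(* Let $\Omega\subset\mathbb{R}^N$ be a bounded open set and let $p,q:\Omega\to[1,\infty)$ be measurable with $q(x)\le p(x)\le p_+<\infty$ for all $x\in\Omega$. Assume there exist $\alpha>0$ and a sequence $\{E_n\}$ of measurable subsets of $\Omega$ with $|E_n|\to0$ such that $\|\chi_{E_n}\|_{r'(\cdot)}\ge\alpha$ for all $n$. Then $L^{p(\cdot)}(\Omega)$ is not almost-compactly embedded in $L^{q(\cdot)}(\Omega)$.
   Context: For measurable $e:\Omega\to[1,\infty)$, $\|u\|_{e(\cdot)}=\inf\{\lambda>0:\int_\Omega|u(x)/\lambda|^{e(x)}dx\le1\}$ and $L^{e(\cdot)}(\Omega)$ is the set of measurable $u$ with finite norm. Here $r(x)=p(x)/q(x)$ and $r'(x)=p(x)/(p(x)-q(x))\in(1,\infty]$, with $r'(x)=\infty$ where $p(x)=q(x)$; for this exponent $\|v\|_{r'(\cdot)}=\inf\{\lambda>0:\int_{\{r'<\infty\}}|v/\lambda|^{r'(x)}dx+\operatorname{ess\,sup}_{\{r'=\infty\}}|v/\lambda|\le1\}$. Almost-compact embedding: for Banach function spaces $X,Y$ on $\Omega$, $X$ is almost-compactly embedded in $Y$ if for every sequence $\{E_n\}$ of measurable subsets of $\Omega$ with $\chi_{E_n}\to0$ pointwise a.e. one has $\lim_{n\to\infty}\sup_{\|u\|_X\le1}\|u\chi_{E_n}\|_Y=0$. *)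

theory Defs
  imports "HOL-Analysis.Analysis"
begin

definition vmodular :: "'a::euclidean_space set \<Rightarrow> ('a \<Rightarrow> real) \<Rightarrow> ('a \<Rightarrow> real) \<Rightarrow> ennreal" where
  "vmodular \<Omega> e u = (\<integral>\<^sup>+ x \<in> \<Omega>. ennreal (\<bar>u x\<bar> powr e x) \<partial>lebesgue)"

text \<open>Luxemburg norm, ennreal-valued (infinite when no admissible lambda exists).\<close>
definition vnorm :: "'a::euclidean_space set \<Rightarrow> ('a \<Rightarrow> real) \<Rightarrow> ('a \<Rightarrow> real) \<Rightarrow> ennreal" where
  "vnorm \<Omega> e u = (INF l \<in> {l::real. l > 0 \<and> vmodular \<Omega> e (\<lambda>x. u x / l) \<le> 1}. ennreal l)"

definition vLp :: "'a::euclidean_space set \<Rightarrow> ('a \<Rightarrow> real) \<Rightarrow> ('a \<Rightarrow> real) set" where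
  "vLp \<Omega> e = {u. set_borel_measurable lebesgue \<Omega> u \<and> vnorm \<Omega> e u < \<infinity>}"

text \<open>Essential supremum of abs f over S (w.r.t. Lebesgue measure); equals 0 if S is null.\<close>
definition ess_sup_on :: "'a::euclidean_space set \<Rightarrow> ('a \<Rightarrow> real) \<Rightarrow> ennreal" where
  "ess_sup_on S f = Inf {c::ennreal. AE x in lebesgue. x \<in> S \<longrightarrow> ennreal \<bar>f x\<bar> \<le> c}"

text \<open>Conjugate exponent r' = p/(p-q) of r = p/q, used where p /= q (r' = infinity where p = q).\<close>
definition rconj :: "('a \<Rightarrow> real) \<Rightarrow> ('a \<Rightarrow> real) \<Rightarrow> 'a \<Rightarrow> real" where
  "rconj p q x = p x / (p x - q x)"

definition rconj_norm :: "'a::euclidean_space set \<Rightarrow> ('a \<Rightarrow> real) \<Rightarrow> ('a \<Rightarrow> real) \<Rightarrow> ('a \<Rightarrow> real) \<Rightarrow> ennreal" where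
  "rconj_norm \<Omega> p q v = (INF l \<in> {l::real. l > 0 \<and>
      vmodular {x \<in> \<Omega>. p x \<noteq> q x} (rconj p q) (\<lambda>x. v x / l)
      + ess_sup_on {x \<in> \<Omega>. p x = q x} (\<lambda>x. v x / l) \<le> 1}. ennreal l)"

definition almost_compact :: "'a::euclidean_space set \<Rightarrow> ('a \<Rightarrow> real) \<Rightarrow> ('a \<Rightarrow> real) \<Rightarrow> bool" where
  "almost_compact \<Omega> e f \<longleftrightarrow>
    (\<forall>E :: nat \<Rightarrow> 'a set.
       (\<forall>n. E n \<in> sets lebesgue \<and> E n \<subseteq> \<Omega>) \<and>
       (AE x in lebesgue. x \<in> \<Omega> \<longrightarrow> (\<lambda>n. indicator (E n) x :: real) \<longlonglongrightarrow> 0)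
       \<longrightarrow> ((\<lambda>n. SUP u \<in> {u \<in> vLp \<Omega> e. vnorm \<Omega> e u \<le> 1}.
                 vnorm \<Omega> f (\<lambda>x. u x * indicator (E n) x)) \<longlonglongrightarrow> 0))"

end

theory Submission
  imports Defs
begin

(* Fix 0 < beta < min alpha 1. As beta is not admissible for the r'-norm of the indicator of
   E = E_n, either E meets {p = q} in positive measure, and the normalized indicator of that part
   is a unit density w, or the integral of beta^(-r') over E \<inter> {p > q} exceeds 1, and a normalized
   truncation of beta^(-r') is a unit density w; in both cases beta w \<le> w^(q/p), the second time
   because r' q/p = r' - 1. The function u = w^(1/p) has p-modular 1, while for l < beta \<le> 1 the
   q-modular of u/l is at least beta/l > 1. So every E_n carries a function of the unit ball of
   L^p(.) whose restriction to E_n has L^q(.)-norm at least beta. By Borel-Cantelli a subsequence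
   of the E_n has indicators tending to 0 almost everywhere, contradicting almost-compactness. *)

lemma set_borel_measurable_extend:
  fixes p :: "'a \<Rightarrow> real"
  assumes "set_borel_measurable M \<Omega> p"
  obtains P where "P \<in> borel_measurable M" "\<And>x. x \<in> \<Omega> \<Longrightarrow> P x = p x"
  using assms unfolding set_borel_measurable_def
  by (intro that[of "\<lambda>x. indicator \<Omega> x * p x"]) auto

lemma vnorm_le_1_if_vmodular_le_1:
  assumes "vmodular \<Omega> e u \<le> 1"
  shows "vnorm \<Omega> e u \<le> 1"
  unfolding vnorm_def by (rule INF_lower2[of 1]) (use assms in auto)

lemma ennreal_le_vnormI:
  assumes "\<And>l. 0 < l \<Longrightarrow> l < \<beta> \<Longrightarrow> 1 < vmodular \<Omega> e (\<lambda>x. u x / l)"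
  shows "ennreal \<beta> \<le> vnorm \<Omega> e u"
  unfolding vnorm_def
proof (rule INF_greatest)
  fix l assume "l \<in> {l. 0 < l \<and> vmodular \<Omega> e (\<lambda>x. u x / l) \<le> 1}"
  then have "\<not> l < \<beta>" using assms[of l] by auto
  then show "ennreal \<beta> \<le> ennreal l" by (simp add: ennreal_leI)
qed

lemma rconj_norm_ge_imp_not_admissible:
  assumes "0 < \<beta>" "\<beta> < \<alpha>" "ennreal \<alpha> \<le> rconj_norm \<Omega> p q v"
  shows "1 < vmodular {x\<in>\<Omega>. p x \<noteq> q x} (rconj p q) (\<lambda>x. v x / \<beta>)
           + ess_sup_on {x\<in>\<Omega>. p x = q x} (\<lambda>x. v x / \<beta>)"
proof (rule ccontr)
  assume "\<not> ?thesis"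
  then have "rconj_norm \<Omega> p q v \<le> ennreal \<beta>"
    unfolding rconj_norm_def using \<open>0 < \<beta>\<close> by (intro INF_lower2[of \<beta>]) (auto simp: not_less)
  then have "ennreal \<alpha> \<le> ennreal \<beta>" using assms(3) by (rule order.trans[rotated])
  then show False using assms(1,2) by simp
qed

lemma ess_sup_on_eq_0:
  assumes "AE x in lebesgue. x \<in> S \<longrightarrow> f x = 0"
  shows "ess_sup_on S f = 0"
proof -
  have "AE x in lebesgue. x \<in> S \<longrightarrow> ennreal \<bar>f x\<bar> \<le> 0"
    using assms by eventually_elim simp
  then show ?thesis
    unfolding ess_sup_on_def by (metis (mono_tags) Inf_lower mem_Collect_eq le_zero_eq)
qed

lemma vmodular_indicator_powr_inverse:
  assumes "A \<subseteq> \<Omega>" "\<forall>x\<in>A. 0 \<le> w x \<and> p x \<noteq> 0"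
  shows "vmodular \<Omega> p (\<lambda>x. indicator A x * w x powr (1 / p x)) = (\<integral>\<^sup>+x\<in>A. ennreal (w x) \<partial>lebesgue)"
  unfolding vmodular_def
  using assms by (intro nn_integral_cong) (auto simp: indicator_def powr_powr)

lemma nn_integral_truncation_gt:
  fixes f :: "'a \<Rightarrow> real"
  assumes [measurable]: "f \<in> borel_measurable M" "S \<in> sets M"
    and gt: "c < (\<integral>\<^sup>+x\<in>S. ennreal (f x) \<partial>M)"
  obtains k :: nat where "c < (\<integral>\<^sup>+x\<in>S \<inter> {x\<in>space M. f x \<le> real k}. ennreal (f x) \<partial>M)"
proof -
  define T where "T k = S \<inter> {x\<in>space M. f x \<le> real k}" for k :: nat
  have [measurable]: "T k \<in> sets M" for k unfolding T_def by measurable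
  have SUP_T: "(SUP k. ennreal (f x) * indicator (T k) x) = ennreal (f x) * indicator S x" for x
  proof (cases "x \<in> S")
    case True
    obtain k :: nat where "f x \<le> real k" using real_arch_simple by blast
    then have "x \<in> T k" using True sets.sets_into_space[OF assms(2)] by (auto simp: T_def)
    then have "ennreal (f x) \<le> (SUP k. ennreal (f x) * indicator (T k) x)"
      by (intro SUP_upper2[of k]) auto
    moreover have "(SUP k. ennreal (f x) * indicator (T k) x) \<le> ennreal (f x)"
      by (intro SUP_least) (auto simp: indicator_def)
    ultimately show ?thesis using True by (simp add: antisym)
  qed (simp add: T_def)
  have "incseq (\<lambda>k x. ennreal (f x) * indicator (T k) x)"
    by (intro incseq_SucI le_funI) (auto simp: T_def indicator_def)
  then have "(\<integral>\<^sup>+x\<in>S. ennreal (f x) \<partial>M) = (SUP k. \<integral>\<^sup>+x\<in>T k. ennreal (f x) \<partial>M)"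
    using nn_integral_monotone_convergence_SUP[of "\<lambda>k x. ennreal (f x) * indicator (T k) x" M]
    by (simp add: SUP_T)
  with gt show ?thesis using that by (auto simp: less_SUP_iff T_def)
qed

definition unit_density_on :: "'a measure \<Rightarrow> 'a set \<Rightarrow> ('a \<Rightarrow> real) \<Rightarrow> bool" where
  "unit_density_on M A w \<longleftrightarrow> A \<in> sets M \<and> w \<in> borel_measurable M \<and> (\<forall>x\<in>A. 0 \<le> w x)
     \<and> (\<integral>\<^sup>+x\<in>A. ennreal (w x) \<partial>M) = 1"

lemma unit_density_on_constant:
  assumes "H \<in> sets M" "emeasure M H \<noteq> 0" "emeasure M H < \<infinity>"
  shows "unit_density_on M H (\<lambda>_. 1 / measure M H)"
proof -
  have "emeasure M H = ennreal (measure M H)" and "0 < measure M H"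
    using assms by (auto simp: emeasure_eq_ennreal_measure measure_nonneg zero_less_iff_neq_zero
        intro: order_le_neq_trans)
  then show ?thesis
    using assms(1) nn_integral_cmult_indicator[OF assms(1), of "ennreal (1 / measure M H)"]
    by (simp add: unit_density_on_def ennreal_mult[symmetric])
qed

lemma unit_density_on_normalized_truncation:
  fixes g \<theta> :: "'a \<Rightarrow> real"
  assumes [measurable]: "g \<in> borel_measurable M" "S \<in> sets M"
    and "emeasure M S < \<infinity>" and "0 \<le> \<beta>"
    and g: "\<forall>x\<in>S. 0 \<le> g x \<and> 0 \<le> \<theta> x \<and> \<theta> x \<le> 1 \<and> \<beta> * g x \<le> g x powr \<theta> x"
    and "1 < (\<integral>\<^sup>+x\<in>S. ennreal (g x) \<partial>M)"
  obtains A w where "A \<subseteq> S" "unit_density_on M A w" "\<forall>x\<in>A. \<beta> * w x \<le> w x powr \<theta> x"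
proof -
  obtain k :: nat where k: "1 < (\<integral>\<^sup>+x\<in>S \<inter> {x\<in>space M. g x \<le> real k}. ennreal (g x) \<partial>M)"
    using nn_integral_truncation_gt assms(1,2,6) by blast
  define A where "A = S \<inter> {x\<in>space M. g x \<le> real k}"
  have [measurable]: "A \<in> sets M" unfolding A_def by measurable
  define I where "I = (\<integral>\<^sup>+x\<in>A. ennreal (g x) \<partial>M)"
  have "I \<le> (\<integral>\<^sup>+x\<in>S. ennreal (real k) \<partial>M)"
    unfolding I_def A_def by (intro nn_integral_mono) (auto simp: indicator_def ennreal_leI)
  also have "\<dots> < \<infinity>"
    using assms(3) by (simp add: nn_integral_cmult_indicator ennreal_mult_less_top)
  finally obtain c where I: "I = ennreal c" and c: "1 < c"
    using k by (cases I) (auto simp: I_def A_def)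
  define w where "w x = g x / c" for x
  have [measurable]: "w \<in> borel_measurable M" unfolding w_def by measurable
  have "(\<integral>\<^sup>+x\<in>A. ennreal (w x) \<partial>M) = (\<integral>\<^sup>+x. ennreal (1 / c) * (ennreal (g x) * indicator A x) \<partial>M)"
    using c by (intro nn_integral_cong) (auto simp: w_def indicator_def ennreal_mult'[symmetric])
  also have "\<dots> = ennreal (1 / c) * I" unfolding I_def by (rule nn_integral_cmult) measurable
  also have "\<dots> = 1" using I c by (simp add: ennreal_mult[symmetric])
  finally have "unit_density_on M A w"
    using g c by (auto simp: unit_density_on_def w_def A_def)
  moreover have "\<beta> * w x \<le> w x powr \<theta> x" if "x \<in> A" for x
  proof -
    have gx: "0 \<le> g x" "0 \<le> \<theta> x" "\<theta> x \<le> 1" "\<beta> * g x \<le> g x powr \<theta> x"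
      using g that by (auto simp: A_def)
    have "c powr \<theta> x \<le> c" using c gx powr_mono[of "\<theta> x" 1 c] by simp
    then have "\<beta> * g x / c \<le> \<beta> * g x / c powr \<theta> x"
      using c gx \<open>0 \<le> \<beta>\<close> by (intro divide_left_mono) auto
    also have "\<dots> \<le> g x powr \<theta> x / c powr \<theta> x"
      using c gx by (intro divide_right_mono) auto
    finally show ?thesis using c gx by (simp add: w_def powr_divide)
  qed
  moreover have "A \<subseteq> S" unfolding A_def by blast
  ultimately show ?thesis using that by blast
qed

lemma unit_density_on_exponent_equality:
  fixes p q :: "'a \<Rightarrow> real"
  assumes "H \<in> sets M" "emeasure M H \<noteq> 0" "emeasure M H < \<infinity>"
    and pq: "\<forall>x\<in>H. p x = q x \<and> q x \<noteq> 0" and "0 \<le> \<beta>" "\<beta> \<le> 1"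
  obtains w where "unit_density_on M H w" "\<forall>x\<in>H. \<beta> * w x \<le> w x powr (q x / p x)"
proof
  show "unit_density_on M H (\<lambda>_. 1 / measure M H)"
    using assms(1-3) by (rule unit_density_on_constant)
  show "\<forall>x\<in>H. \<beta> * (1 / measure M H) \<le> (1 / measure M H) powr (q x / p x)"
    using pq assms(5,6) by (simp add: divide_right_mono)
qed

lemma unit_density_on_exponent_gap:
  fixes p q :: "'a \<Rightarrow> real"
  assumes [measurable]: "p \<in> borel_measurable M" "q \<in> borel_measurable M" "S \<in> sets M"
    and "emeasure M S < \<infinity>" and pq: "\<forall>x\<in>S. 1 \<le> q x \<and> q x < p x" and "0 < \<beta>"
    and "1 < (\<integral>\<^sup>+x\<in>S. ennreal ((1 / \<beta>) powr rconj p q x) \<partial>M)"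
  obtains A w where "A \<subseteq> S" "unit_density_on M A w" "\<forall>x\<in>A. \<beta> * w x \<le> w x powr (q x / p x)"
proof (rule unit_density_on_normalized_truncation[of "\<lambda>x. (1 / \<beta>) powr rconj p q x" M S \<beta> "\<lambda>x. q x / p x"])
  show "(\<lambda>x. (1 / \<beta>) powr rconj p q x) \<in> borel_measurable M" unfolding rconj_def by measurable
  show "\<forall>x\<in>S. 0 \<le> (1 / \<beta>) powr rconj p q x \<and> 0 \<le> q x / p x \<and> q x / p x \<le> 1
      \<and> \<beta> * (1 / \<beta>) powr rconj p q x \<le> ((1 / \<beta>) powr rconj p q x) powr (q x / p x)"
  proof
    fix x assume "x \<in> S"
    then have x: "1 \<le> q x" "q x < p x" using pq by auto
    then have "rconj p q x * (q x / p x) = rconj p q x - 1" by (simp add: rconj_def field_simps)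
    then show "0 \<le> (1 / \<beta>) powr rconj p q x \<and> 0 \<le> q x / p x \<and> q x / p x \<le> 1
      \<and> \<beta> * (1 / \<beta>) powr rconj p q x \<le> ((1 / \<beta>) powr rconj p q x) powr (q x / p x)"
      using x \<open>0 < \<beta>\<close> by (simp add: powr_powr powr_diff)
  qed
qed (use assms in auto)

lemma unit_density_from_rconj_norm_bound:
  fixes \<Omega> E :: "'a::euclidean_space set" and p q :: "'a \<Rightarrow> real"
  assumes \<Omega>: "\<Omega> \<in> sets lebesgue" "emeasure lebesgue \<Omega> < \<infinity>"
    and pm: "set_borel_measurable lebesgue \<Omega> p" and qm: "set_borel_measurable lebesgue \<Omega> q"
    and pq: "\<forall>x\<in>\<Omega>. 1 \<le> q x \<and> q x \<le> p x"
    and \<beta>: "0 < \<beta>" "\<beta> \<le> 1" "\<beta> < \<alpha>"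
    and E: "E \<in> sets lebesgue" "E \<subseteq> \<Omega>"
    and norm_E: "ennreal \<alpha> \<le> rconj_norm \<Omega> p q (indicator E)"
  obtains A w where "A \<subseteq> E" "unit_density_on lebesgue A w" "\<forall>x\<in>A. \<beta> * w x \<le> w x powr (q x / p x)"
proof -
  obtain P Q where [measurable]: "P \<in> borel_measurable lebesgue" "Q \<in> borel_measurable lebesgue"
    and PQ: "\<And>x. x \<in> \<Omega> \<Longrightarrow> P x = p x" "\<And>x. x \<in> \<Omega> \<Longrightarrow> Q x = q x"
    using set_borel_measurable_extend[OF pm] set_borel_measurable_extend[OF qm] by metis
  define G where "G = {x\<in>\<Omega>. p x = q x}"
  define F where "F = {x\<in>\<Omega>. p x \<noteq> q x}"
  have [measurable]: "G \<in> sets lebesgue" "F \<in> sets lebesgue"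
  proof -
    have "G = \<Omega> \<inter> {x. P x = Q x}" "F = \<Omega> \<inter> {x. P x \<noteq> Q x}"
      using PQ by (auto simp: G_def F_def)
    then show "G \<in> sets lebesgue" "F \<in> sets lebesgue" using \<Omega>(1) by simp_all
  qed
  have E_fin: "emeasure lebesgue S < \<infinity>" if "S \<subseteq> \<Omega>" "S \<in> sets lebesgue" for S
    using emeasure_mono[OF that(1) \<Omega>(1)] \<Omega>(2) by (simp add: le_less_trans)
  have not_adm: "1 < vmodular F (rconj p q) (\<lambda>x. indicator E x / \<beta>)
                   + ess_sup_on G (\<lambda>x. indicator E x / \<beta>)"
    unfolding F_def G_def using \<beta>(1,3) norm_E by (rule rconj_norm_ge_imp_not_admissible)
  show ?thesis
  proof (cases "emeasure lebesgue (E \<inter> G) = 0")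
    case False
    have "\<forall>x\<in>E \<inter> G. p x = q x \<and> q x \<noteq> 0" using pq E(2) by (force simp: G_def)
    then obtain w where "unit_density_on lebesgue (E \<inter> G) w"
      "\<forall>x\<in>E \<inter> G. \<beta> * w x \<le> w x powr (q x / p x)"
      using unit_density_on_exponent_equality[of "E \<inter> G" lebesgue p q \<beta>] False E E_fin[of "E \<inter> G"] \<beta>(1,2)
      by auto
    then show ?thesis using that by blast
  next
    case True
    have "AE x in lebesgue. x \<notin> E \<inter> G"
      using True E(1) by (intro AE_not_in) (auto intro: null_setsI)
    then have "ess_sup_on G (\<lambda>x. indicator E x / \<beta>) = 0"
      by (intro ess_sup_on_eq_0) (auto elim!: eventually_mono)
    have "vmodular F (rconj p q) (\<lambda>x. indicator E x / \<beta>)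
        = (\<integral>\<^sup>+x\<in>E \<inter> F. ennreal ((1 / \<beta>) powr rconj P Q x) \<partial>lebesgue)"
      unfolding vmodular_def using PQ \<beta>(1)
      by (intro nn_integral_cong) (auto simp: rconj_def F_def indicator_def)
    with not_adm \<open>ess_sup_on G _ = 0\<close>
    have gt: "1 < (\<integral>\<^sup>+x\<in>E \<inter> F. ennreal ((1 / \<beta>) powr rconj P Q x) \<partial>lebesgue)" by simp
    obtain A w where A: "A \<subseteq> E \<inter> F" "unit_density_on lebesgue A w"
      and bound: "\<forall>x\<in>A. \<beta> * w x \<le> w x powr (Q x / P x)"
    proof (rule unit_density_on_exponent_gap[of P lebesgue Q "E \<inter> F" \<beta>])
      show "emeasure lebesgue (E \<inter> F) < \<infinity>" using E by (intro E_fin) auto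
      show "\<forall>x\<in>E \<inter> F. 1 \<le> Q x \<and> Q x < P x" using pq PQ by (auto simp: F_def)
    qed (use E(1) \<beta>(1) gt in auto)
    moreover have "\<forall>x\<in>A. \<beta> * w x \<le> w x powr (q x / p x)"
    proof
      fix x assume "x \<in> A"
      then have "x \<in> \<Omega>" using A(1) by (auto simp: F_def)
      moreover have "\<beta> * w x \<le> w x powr (Q x / P x)" using bound \<open>x \<in> A\<close> by blast
      ultimately show "\<beta> * w x \<le> w x powr (q x / p x)" using PQ by simp
    qed
    ultimately show ?thesis using that by blast
  qed
qed

lemma vnorm_ge_if_unit_density_bound:
  assumes "A \<subseteq> E" "E \<subseteq> \<Omega>" and w: "unit_density_on lebesgue A w"
    and pq: "\<forall>x\<in>A. 1 \<le> q x \<and> q x \<le> p x"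
    and bound: "\<forall>x\<in>A. \<beta> * w x \<le> w x powr (q x / p x)"
    and "0 < \<beta>" "\<beta> \<le> 1"
  shows "ennreal \<beta> \<le> vnorm \<Omega> q (\<lambda>x. indicator A x * w x powr (1 / p x) * indicator E x)"
proof (rule ennreal_le_vnormI)
  fix l :: real assume l: "0 < l" "l < \<beta>"
  have [measurable]: "A \<in> sets lebesgue" "w \<in> borel_measurable lebesgue"
    using w by (auto simp: unit_density_on_def)
  have pointwise: "\<beta> / l * w x \<le> \<bar>indicator A x * w x powr (1 / p x) * indicator E x / l\<bar> powr q x"
    if "x \<in> A" for x
  proof -
    have x: "1 \<le> q x" "q x \<le> p x" "0 \<le> w x" using that pq w by (auto simp: unit_density_on_def)
    have "l powr q x \<le> l" using l \<open>\<beta> \<le> 1\<close> x by (intro powr_le_one_le) auto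
    then have "\<beta> * w x / l \<le> w x powr (q x / p x) / l powr q x"
      using bound that l x by (intro frac_le) auto
    also have "\<dots> = \<bar>indicator A x * w x powr (1 / p x) * indicator E x / l\<bar> powr q x"
      using that \<open>A \<subseteq> E\<close> l x by (auto simp: powr_divide powr_powr)
    finally show ?thesis by simp
  qed
  have "1 < ennreal (\<beta> / l)" using l by simp
  also have "\<dots> = ennreal (\<beta> / l) * (\<integral>\<^sup>+x\<in>A. ennreal (w x) \<partial>lebesgue)"
    using w by (simp add: unit_density_on_def)
  also have "\<dots> = (\<integral>\<^sup>+x\<in>A. ennreal (\<beta> / l * w x) \<partial>lebesgue)"
    using l \<open>0 < \<beta>\<close> w
    by (subst nn_integral_cmult[symmetric]) (auto simp: unit_density_on_def ennreal_mult'[symmetric]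
        intro!: nn_integral_cong split: split_indicator)
  also have "\<dots> \<le> vmodular \<Omega> q (\<lambda>x. indicator A x * w x powr (1 / p x) * indicator E x / l)"
    unfolding vmodular_def using assms(1,2) pointwise
    by (intro nn_integral_mono) (auto simp: indicator_def intro: ennreal_leI)
  finally show "1 < vmodular \<Omega> q (\<lambda>x. indicator A x * w x powr (1 / p x) * indicator E x / l)" .
qed

lemma exists_unit_ball_element_restriction_ge:
  assumes pm: "set_borel_measurable lebesgue \<Omega> p"
    and "A \<subseteq> E" "E \<subseteq> \<Omega>" and w: "unit_density_on lebesgue A w"
    and pq: "\<forall>x\<in>A. 1 \<le> q x \<and> q x \<le> p x"
    and "\<forall>x\<in>A. \<beta> * w x \<le> w x powr (q x / p x)"
    and "0 < \<beta>" "\<beta> \<le> 1"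
  shows "\<exists>u\<in>vLp \<Omega> p. vnorm \<Omega> p u \<le> 1 \<and> ennreal \<beta> \<le> vnorm \<Omega> q (\<lambda>x. u x * indicator E x)"
proof (intro bexI conjI)
  define u where "u x = indicator A x * w x powr (1 / p x)" for x
  obtain P where [measurable]: "P \<in> borel_measurable lebesgue" and P: "\<And>x. x \<in> \<Omega> \<Longrightarrow> P x = p x"
    using set_borel_measurable_extend[OF pm] by blast
  have [measurable]: "A \<in> sets lebesgue" "w \<in> borel_measurable lebesgue"
    using w by (auto simp: unit_density_on_def)
  have "(\<lambda>x. indicator \<Omega> x * u x) = (\<lambda>x. indicator A x * w x powr (1 / P x))"
    using P \<open>A \<subseteq> E\<close> \<open>E \<subseteq> \<Omega>\<close> by (auto simp: u_def indicator_def fun_eq_iff)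
  then have "set_borel_measurable lebesgue \<Omega> u" by (simp add: set_borel_measurable_def)
  have "vmodular \<Omega> p u = (\<integral>\<^sup>+x\<in>A. ennreal (w x) \<partial>lebesgue)"
    unfolding u_def using assms(2,3) w pq
    by (intro vmodular_indicator_powr_inverse) (auto simp: unit_density_on_def)
  also have "\<dots> = 1" using w by (simp add: unit_density_on_def)
  finally show u_norm: "vnorm \<Omega> p u \<le> 1" by (intro vnorm_le_1_if_vmodular_le_1) simp
  show "u \<in> vLp \<Omega> p"
    unfolding vLp_def using \<open>set_borel_measurable lebesgue \<Omega> u\<close> u_norm
    by (auto intro: order.strict_trans1)
  show "ennreal \<beta> \<le> vnorm \<Omega> q (\<lambda>x. u x * indicator E x)"
    unfolding u_def by (rule vnorm_ge_if_unit_density_bound[OF assms(2-)])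
qed

lemma emeasure_tendsto_0_imp_AE_indicator_subseq:
  fixes E :: "nat \<Rightarrow> 'a set"
  assumes [measurable]: "\<And>n. E n \<in> sets M" and lim: "(\<lambda>n. emeasure M (E n)) \<longlonglongrightarrow> 0"
  obtains s :: "nat \<Rightarrow> nat"
    where "strict_mono s" "AE x in M. (\<lambda>k. indicator (E (s k)) x :: real) \<longlonglongrightarrow> 0"
proof -
  define small where "small k n \<longleftrightarrow> emeasure M (E n) < ennreal ((1/2)^k)" for k n
  have "eventually (small k) sequentially" for k
    unfolding small_def by (rule order_tendstoD(2)[OF lim]) simp
  then obtain N where N: "\<And>k n. N k \<le> n \<Longrightarrow> small k n"
    unfolding eventually_sequentially by metis
  have "small k (max (N k) (Suc n))" "n < max (N k) (Suc n)" for k n by (auto intro: N)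
  then have "\<exists>s. \<forall>k. small k (s k) \<and> s k < s (Suc k)"
    by (intro dependent_nat_choice) blast+
  then obtain s where s: "\<And>k. small k (s k) \<and> s k < s (Suc k)" by blast
  have fin: "emeasure M (E (s k)) < \<infinity>" for k
    using order.strict_trans[OF s[of k, THEN conjunct1, unfolded small_def] ennreal_less_top] by simp
  have bound: "norm (measure M (E (s k))) \<le> (1/2)^k" for k
    using s[of k] fin[of k] by (simp add: small_def emeasure_eq_ennreal_measure ennreal_less_iff)
  have "summable (\<lambda>k. (1/2::real)^k)" by (rule summable_geometric) simp
  then have "summable (\<lambda>k. measure M (E (s k)))"
    by (rule summable_comparison_test') (rule bound)
  then have "AE x in M. eventually (\<lambda>k. x \<in> space M - E (s k)) sequentially"
    using fin by (intro borel_cantelli_AE1) auto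
  then have "AE x in M. (\<lambda>k. indicator (E (s k)) x :: real) \<longlonglongrightarrow> 0"
    by eventually_elim (auto elim!: eventually_mono intro: tendsto_eventually)
  moreover have "strict_mono s" using s by (simp add: strict_mono_Suc_iff)
  ultimately show ?thesis using that by blast
qed

lemma not_almost_compactI:
  assumes E: "\<And>n. E n \<in> sets lebesgue" "\<And>n. E n \<subseteq> \<Omega>"
    and "(\<lambda>n. emeasure lebesgue (E n)) \<longlonglongrightarrow> 0" and "0 < \<beta>"
    and witness: "\<And>n. \<exists>u\<in>vLp \<Omega> e. vnorm \<Omega> e u \<le> 1 \<and> ennreal \<beta> \<le> vnorm \<Omega> f (\<lambda>x. u x * indicator (E n) x)"
  shows "\<not> almost_compact \<Omega> e f"
proof
  assume "almost_compact \<Omega> e f"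
  obtain s :: "nat \<Rightarrow> nat" where "AE x in lebesgue. (\<lambda>k. indicator (E (s k)) x :: real) \<longlonglongrightarrow> 0"
    using emeasure_tendsto_0_imp_AE_indicator_subseq assms(1,3) by blast
  then have "AE x in lebesgue. x \<in> \<Omega> \<longrightarrow> (\<lambda>k. indicator (E (s k)) x :: real) \<longlonglongrightarrow> 0"
    by (rule eventually_mono) simp
  then have "(\<lambda>k. SUP u \<in> {u \<in> vLp \<Omega> e. vnorm \<Omega> e u \<le> 1}.
               vnorm \<Omega> f (\<lambda>x. u x * indicator (E (s k)) x)) \<longlonglongrightarrow> 0"
    using \<open>almost_compact \<Omega> e f\<close>[unfolded almost_compact_def, rule_format, of "\<lambda>k. E (s k)"] E
    by blast
  moreover have "ennreal \<beta> \<le> (SUP u \<in> {u \<in> vLp \<Omega> e. vnorm \<Omega> e u \<le> 1}.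
               vnorm \<Omega> f (\<lambda>x. u x * indicator (E (s k)) x))" for k
    using witness[of "s k"] by (auto intro: SUP_upper2)
  ultimately have "ennreal \<beta> \<le> 0" by (intro LIMSEQ_le_const) auto
  then show False using \<open>0 < \<beta>\<close> by simp
qed

theorem lemma3p5:
  fixes \<Omega> :: "'a::euclidean_space set"
    and p q :: "'a \<Rightarrow> real"
    and pplus \<alpha> :: real
    and E :: "nat \<Rightarrow> 'a set"
  assumes "open \<Omega>" and "bounded \<Omega>"
    and "set_borel_measurable lebesgue \<Omega> p"
    and "set_borel_measurable lebesgue \<Omega> q"
    and "\<forall>x\<in>\<Omega>. 1 \<le> q x \<and> q x \<le> p x \<and> p x \<le> pplus"
    and "\<alpha> > 0"
    and "\<forall>n. E n \<in> sets lebesgue \<and> E n \<subseteq> \<Omega>"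
    and "(\<lambda>n. emeasure lebesgue (E n)) \<longlonglongrightarrow> 0"
    and "\<forall>n. rconj_norm \<Omega> p q (\<lambda>x. indicator (E n) x) \<ge> ennreal \<alpha>"
  shows "\<not> almost_compact \<Omega> p q"
proof -
  have \<Omega>: "\<Omega> \<in> sets lebesgue" "emeasure lebesgue \<Omega> < \<infinity>"
    using lmeasurable_open[OF assms(2,1)] by (auto simp: fmeasurable_def)
  define \<beta> where "\<beta> = min \<alpha> 1 / 2"
  have \<beta>: "0 < \<beta>" "\<beta> \<le> 1" "\<beta> < \<alpha>" using assms(6) by (auto simp: \<beta>_def)
  have pq: "\<forall>x\<in>\<Omega>. 1 \<le> q x \<and> q x \<le> p x" using assms(5) by auto
  have witness: "\<exists>u\<in>vLp \<Omega> p. vnorm \<Omega> p u \<le> 1 \<and> ennreal \<beta> \<le> vnorm \<Omega> q (\<lambda>x. u x * indicator (E n) x)"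
    for n
  proof -
    obtain A w where "A \<subseteq> E n" "unit_density_on lebesgue A w" "\<forall>x\<in>A. \<beta> * w x \<le> w x powr (q x / p x)"
      using unit_density_from_rconj_norm_bound[OF \<Omega> assms(3,4) pq \<beta>] assms(7,9) by blast
    then show ?thesis
      using exists_unit_ball_element_restriction_ge[OF assms(3)] assms(7) pq \<beta>(1,2) by blast
  qed
  show ?thesis
    using assms(7) by (intro not_almost_compactI[where E = E and \<beta> = \<beta>] assms(8) \<beta>(1) witness) auto
qed

end
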